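(* Let $T=\bigcup_{j\in J}T_j$ be a finite or countable disjoint union of second-countable Hausdorff manifolds, and let $f:T\to\mathbb{R}^l$ be continuously differentiable. Call $u\in\mathbb{R}^l$ a non-invertible value of $f$ if there exist $t_1\neq t_2$ in $T$ with $f(t_1)=f(t_2)=u$. Suppose there is a sequence $f_n:T\to\mathbb{R}^l$ of continuously differentiable injective functions converging to $f$ uniformly on compact sets. Then the set of non-invertible values of $f$ has Lebesgue measure zero. *)

theory Defs
  imports "HOL-Analysis.Analysis"
begin

definition C1_on :: "('n::euclidean_space \<Rightarrow> 'm::real_normed_vector) \<Rightarrow> 'n set \<Rightarrow> bool" where
  "C1_on g S \<longleftrightarrow>
     (\<exists>D. (\<forall>x\<in>S. (g has_derivative blinfun_apply (D x)) (at x within S)) \<and> continuous_on S D)"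

text \<open>A chart (U, V, phi) of the topological space X: U is open in X, V is a linear
  subspace of the Euclidean space 'n (a copy of R^k, k = dim V), and phi is a
  homeomorphism from U onto an open subset of V.\<close>
definition is_chart :: "'a topology \<Rightarrow> ('a set \<times> 'n::euclidean_space set \<times> ('a \<Rightarrow> 'n)) \<Rightarrow> bool" where
  "is_chart X c \<longleftrightarrow> (case c of (U, V, \<phi>) \<Rightarrow>
      openin X U \<and> subspace V \<and> \<phi> ` U \<subseteq> V \<and>
      openin (top_of_set V) (\<phi> ` U) \<and>
      homeomorphic_map (subtopology X U) (top_of_set (\<phi> ` U)) \<phi>)"

definition C1_atlas :: "'a topology \<Rightarrow> ('a set \<times> 'n::euclidean_space set \<times> ('a \<Rightarrow> 'n)) set \<Rightarrow> bool" where
  "C1_atlas X A \<longleftrightarrow>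
     (\<forall>c\<in>A. is_chart X c) \<and>
     topspace X \<subseteq> (\<Union>c\<in>A. fst c) \<and>
     (\<forall>(U, V, \<phi>)\<in>A. \<forall>(U', V', \<psi>)\<in>A. C1_on (\<psi> \<circ> inv_into U \<phi>) (\<phi> ` (U \<inter> U')))"

definition C1_manifold :: "'a topology \<Rightarrow> ('a set \<times> 'n::euclidean_space set \<times> ('a \<Rightarrow> 'n)) set \<Rightarrow> bool" where
  "C1_manifold X A \<longleftrightarrow> Hausdorff_space X \<and> second_countable X \<and> C1_atlas X A"

definition C1_map :: "'a topology \<Rightarrow> ('a set \<times> 'n::euclidean_space set \<times> ('a \<Rightarrow> 'n)) set
     \<Rightarrow> ('a \<Rightarrow> 'm::real_normed_vector) \<Rightarrow> bool" where
  "C1_map X A f \<longleftrightarrow> (\<forall>(U, V, \<phi>)\<in>A. C1_on (f \<circ> inv_into U \<phi>) (\<phi> ` U))"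

definition noninvertible_values :: "'a set \<Rightarrow> ('a \<Rightarrow> 'b) \<Rightarrow> 'b set" where
  "noninvertible_values T f = {u. \<exists>t1\<in>T. \<exists>t2\<in>T. t1 \<noteq> t2 \<and> f t1 = u \<and> f t2 = u}"

end

theory Submission
  imports Defs
begin

text \<open>
  If a value u is attained at two distinct points t1, t2 and is stable at both -- every
  compact neighbourhood of t_i is mapped by fs n onto a set containing u for all large n --
  then for large n the injective map fs n would take the value u in two disjoint
  neighbourhoods. So every non-invertible value is a value at an unstable point.
  In a chart of dimension l, a point where f has surjective derivative is stable: by
  Brouwer's fixed point theorem, any continuous map uniformly close to f on a small ball
  still attains the value at the centre. Hence unstable values in such a chart are
  critical values, a null set by Sard's theorem. Charts of dimension less than l have
  null image, and charts of dimension greater than l are empty by invariance of domain,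
  since fs 0 is injective. By second countability, countably many charts cover each of the
  countably many components, so the non-invertible values lie in a countable union of null sets.
\<close>

text \<open>The library's Sard theorem needs a wellordered index type; this copy of a finite type
  provides one.\<close>

typedef 'a wellordered = "UNIV :: 'a set" by simp

instance wellordered :: (finite) finite
  by standard (simp add: type_definition.univ[OF type_definition_wellordered])

instantiation wellordered :: (finite) linorder
begin
definition less_eq_wellordered :: "'a wellordered \<Rightarrow> 'a wellordered \<Rightarrow> bool"
  where "x \<le> y \<longleftrightarrow> to_nat (Rep_wellordered x) \<le> to_nat (Rep_wellordered y)"
definition less_wellordered :: "'a wellordered \<Rightarrow> 'a wellordered \<Rightarrow> bool"
  where "x < y \<longleftrightarrow> to_nat (Rep_wellordered x) < to_nat (Rep_wellordered y)"
instance
  by standard (auto simp: less_eq_wellordered_def less_wellordered_def Rep_wellordered_inject)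
end

instance wellordered :: (finite) wellorder
proof
  fix P :: "'a wellordered \<Rightarrow> bool" and a
  assume step: "\<And>x. (\<And>y. y < x \<Longrightarrow> P y) \<Longrightarrow> P x"
  have "P x" if "to_nat (Rep_wellordered x) = n" for n x
    using that by (induction n arbitrary: x rule: less_induct) (metis step less_wellordered_def)
  then show "P a" by blast
qed

lemma card_wellordered [simp]: "CARD('a wellordered) = CARD('a::finite)"
  using type_definition.card[OF type_definition_wellordered] by simp

lemma negligible_critical_values_wellorder:
  fixes h :: "real^'m::{finite,wellorder} \<Rightarrow> real^'m::{finite,wellorder}"
  assumes der: "\<And>x. x \<in> S \<Longrightarrow> (h has_derivative h' x) (at x within S)"
    and crit: "\<And>x. x \<in> S \<Longrightarrow> \<not> surj (h' x)"
  shows "negligible (h ` S)"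
proof (rule baby_Sard[OF order_refl der])
  fix x assume "x \<in> S"
  then have "linear (h' x)" using der has_derivative_linear by blast
  then have "rank (matrix (h' x)) \<noteq> CARD('m)"
    using crit[OF \<open>x \<in> S\<close>] by (metis full_rank_surjective matrix_vector_mul)
  then show "rank (matrix (h' x)) < CARD('m)"
    using rank_bound[of "matrix (h' x)"] by linarith
qed

lemma negligible_critical_values:
  fixes h :: "real^'l::finite \<Rightarrow> real^'l"
  assumes der: "\<And>x. x \<in> S \<Longrightarrow> (h has_derivative h' x) (at x within S)"
    and crit: "\<And>x. x \<in> S \<Longrightarrow> \<not> surj (h' x)"
  shows "negligible (h ` S)"
proof -
  define P :: "real^'l \<Rightarrow> real^'l wellordered" where "P x = (\<chi> i. x $ Rep_wellordered i)" for x
  define Q :: "real^'l wellordered \<Rightarrow> real^'l" where "Q y = (\<chi> i. y $ Abs_wellordered i)" for y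
  have QP [simp]: "Q (P x) = x" and PQ [simp]: "P (Q y) = y" for x y
    by (simp_all add: P_def Q_def Abs_wellordered_inverse Rep_wellordered_inverse vec_eq_iff)
  have linP: "linear P" and linQ: "linear Q"
    by (auto simp: P_def Q_def linear_iff vec_eq_iff)
  have QPS: "Q ` P ` S = S" by (simp add: image_comp)
  have "negligible ((P \<circ> h \<circ> Q) ` P ` S)"
  proof (rule negligible_critical_values_wellorder)
    fix y assume "y \<in> P ` S"
    then have "Q y \<in> S" by auto
    have "(h \<circ> Q has_derivative h' (Q y) \<circ> Q) (at y within P ` S)"
    proof (rule diff_chain_within)
      show "(Q has_derivative Q) (at y within P ` S)"
        using linQ by (simp add: linear_imp_has_derivative has_derivative_at_withinI)
      show "(h has_derivative h' (Q y)) (at (Q y) within Q ` P ` S)"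
        using der \<open>Q y \<in> S\<close> QPS by simp
    qed
    moreover have "(P has_derivative P) (at ((h \<circ> Q) y) within (h \<circ> Q) ` P ` S)"
      using linP by (simp add: linear_imp_has_derivative has_derivative_at_withinI)
    ultimately show "(P \<circ> h \<circ> Q has_derivative P \<circ> h' (Q y) \<circ> Q) (at y within P ` S)"
      by (simp add: comp_assoc diff_chain_within)
    show "\<not> surj (P \<circ> h' (Q y) \<circ> Q)"
      using crit[OF \<open>Q y \<in> S\<close>] unfolding surj_def by (metis QP comp_apply)
  qed
  moreover have "h ` S = Q ` (P \<circ> h \<circ> Q) ` P ` S"
    by (simp add: image_comp comp_def)
  moreover have "Q differentiable_on (P \<circ> h \<circ> Q) ` P ` S"
    using linQ by (simp add: linear_imp_differentiable_on)
  ultimately show ?thesis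
    using negligible_differentiable_image_negligible[of "(P \<circ> h \<circ> Q) ` P ` S" Q]
    by simp
qed

definition stable_value_at :: "('a::metric_space \<Rightarrow> 'b::metric_space) \<Rightarrow> 'a \<Rightarrow> bool" where
  "stable_value_at h x0 \<longleftrightarrow>
     (\<forall>\<^sub>F r in at_right 0. \<exists>e>0. \<forall>H. continuous_on (cball x0 r) H \<longrightarrow>
        (\<forall>x\<in>cball x0 r. dist (H x) (h x) < e) \<longrightarrow> h x0 \<in> H ` cball x0 r)"

lemma stable_value_at_identity_derivative:
  fixes k :: "'a::euclidean_space \<Rightarrow> 'a"
  assumes "(k has_derivative id) (at x0)"
  shows "stable_value_at k x0"
proof -
  obtain d where "d > 0"
    and d: "\<And>y. norm (y - x0) < d \<Longrightarrow> norm (k y - k x0 - (y - x0)) \<le> 1/2 * norm (y - x0)"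
    using assms unfolding has_derivative_at_alt by (metis id_apply half_gt_zero_iff zero_less_one)
  have "\<exists>e>0. \<forall>H. continuous_on (cball x0 r) H \<longrightarrow>
          (\<forall>x\<in>cball x0 r. dist (H x) (k x) < e) \<longrightarrow> k x0 \<in> H ` cball x0 r"
    if "0 < r" "r < d" for r
  proof (intro exI[of _ "r/2"] conjI allI impI)
    fix H assume contH: "continuous_on (cball x0 r) H"
      and close: "\<forall>x\<in>cball x0 r. dist (H x) (k x) < r/2"
    have "k x0 + (y - H y) \<in> cball x0 r" if y: "y \<in> cball x0 r" for y
    proof -
      have "norm (y - x0) \<le> r" using y by (simp add: dist_norm norm_minus_commute)
      then have "norm (k y - k x0 - (y - x0)) \<le> r/2" using d[of y] \<open>r < d\<close> by simp
      moreover have "norm (H y - k y) < r/2" using close y by (simp add: dist_norm)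
      moreover have "x0 - (k x0 + (y - H y)) = (H y - k y) + (k y - k x0 - (y - x0))"
        by (simp add: algebra_simps)
      ultimately have "norm (x0 - (k x0 + (y - H y))) \<le> r"
        by (metis norm_triangle_ineq add_mono field_sum_of_halves less_imp_le order_trans)
      then show ?thesis by (simp add: dist_norm)
    qed
    then obtain y where "y \<in> cball x0 r" "H y = k x0"
      using brouwer_surjective_cball[OF contH \<open>0 < r\<close>, of "k x0" "{k x0}"] by auto
    then show "k x0 \<in> H ` cball x0 r" by (metis image_eqI)
  qed (use that in simp)
  then show ?thesis
    unfolding stable_value_at_def eventually_at_right_field using \<open>d > 0\<close> by blast
qed

lemma stable_value_at_cancel_bounded_linear:
  fixes B :: "'b::real_normed_vector \<Rightarrow> 'c::real_normed_vector" and h :: "'a::metric_space \<Rightarrow> 'b"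
  assumes "bounded_linear B" "inj B" and stable: "stable_value_at (B \<circ> h) x0"
  shows "stable_value_at h x0"
proof -
  obtain Bn where "Bn > 0" and Bn: "\<And>y. norm (B y) \<le> norm y * Bn"
    using bounded_linear.pos_bounded[OF \<open>bounded_linear B\<close>] by blast
  have "h x0 \<in> H ` cball x0 r"
    if hits: "\<forall>H. continuous_on (cball x0 r) H \<longrightarrow>
          (\<forall>x\<in>cball x0 r. dist (H x) ((B \<circ> h) x) < e) \<longrightarrow> (B \<circ> h) x0 \<in> H ` cball x0 r"
      and contH: "continuous_on (cball x0 r) H"
      and close: "\<forall>x\<in>cball x0 r. dist (H x) (h x) < e / Bn"
    for r e H
  proof -
    have "continuous_on (cball x0 r) (B \<circ> H)"
      using bounded_linear.continuous_on[OF \<open>bounded_linear B\<close> contH] by (simp add: comp_def)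
    moreover have "dist ((B \<circ> H) x) ((B \<circ> h) x) < e" if "x \<in> cball x0 r" for x
    proof -
      have "dist ((B \<circ> H) x) ((B \<circ> h) x) \<le> dist (H x) (h x) * Bn"
        using Bn[of "H x - h x"] \<open>bounded_linear B\<close> by (simp add: dist_norm linear_simps)
      also have "\<dots> < e"
        using close that \<open>Bn > 0\<close> by (simp add: field_simps)
      finally show ?thesis .
    qed
    ultimately have "B (h x0) \<in> B ` H ` cball x0 r"
      using hits by (simp add: image_comp)
    then show ?thesis
      using \<open>inj B\<close> by (simp add: inj_image_mem_iff)
  qed
  with \<open>Bn > 0\<close> show ?thesis
    using stable unfolding stable_value_at_def
    by (elim eventually_mono exE conjE) (metis divide_pos_pos)
qed

lemma stable_value_at_surjective_derivative:
  fixes h :: "'a::euclidean_space \<Rightarrow> 'a"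
  assumes der: "(h has_derivative A) (at x0)" and "surj A"
  shows "stable_value_at h x0"
proof -
  obtain B where "linear B" and BA: "\<And>y. B (A y) = y" and AB: "\<And>y. A (B y) = y"
    using linear_surjective_isomorphism[OF has_derivative_linear[OF der] \<open>surj A\<close>] by auto
  have "(B \<circ> h has_derivative B \<circ> A) (at x0)"
    using der \<open>linear B\<close> by (simp add: diff_chain_at linear_imp_has_derivative)
  moreover have "B \<circ> A = id" using BA by auto
  ultimately have "stable_value_at (B \<circ> h) x0"
    by (simp add: stable_value_at_identity_derivative)
  moreover have "inj B" using AB by (metis injI)
  ultimately show ?thesis
    using \<open>linear B\<close> by (simp add: stable_value_at_cancel_bounded_linear linear_conv_bounded_linear)
qed

lemma negligible_unstable_values:
  fixes h :: "real^'l::finite \<Rightarrow> real^'l"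
  assumes "open S" and "h differentiable_on S"
  shows "\<exists>C. negligible C \<and> (\<forall>x\<in>S. h x \<notin> C \<longrightarrow> stable_value_at h x)"
proof -
  define D where "D x = frechet_derivative h (at x)" for x
  have der: "(h has_derivative D x) (at x)" if "x \<in> S" for x
    using assms that unfolding D_def
    by (simp add: differentiable_on_eq_differentiable_at frechet_derivative_works[symmetric])
  show ?thesis
  proof (intro exI conjI)
    show "negligible (h ` {x \<in> S. \<not> surj (D x)})"
      by (rule negligible_critical_values) (auto intro: has_derivative_at_withinI der)
    show "\<forall>x\<in>S. h x \<notin> h ` {x \<in> S. \<not> surj (D x)} \<longrightarrow> stable_value_at h x"
      using der stable_value_at_surjective_derivative by blast
  qed
qed

definition attained_near :: "'a topology \<Rightarrow> (nat \<Rightarrow> 'a \<Rightarrow> 'b) \<Rightarrow> ('a \<Rightarrow> 'b) \<Rightarrow> 'a \<Rightarrow> bool" where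
  "attained_near X fs f t \<longleftrightarrow>
     (\<forall>W. openin X W \<and> t \<in> W \<longrightarrow>
        (\<exists>K. compactin X K \<and> K \<subseteq> W \<and> (\<forall>\<^sub>F n in sequentially. f t \<in> fs n ` K)))"

lemma attained_near_if_stable_value:
  fixes p :: "'e::heine_borel \<Rightarrow> 'a" and f :: "'a \<Rightarrow> 'b::metric_space"
  assumes "open S" "x0 \<in> S"
    and p: "continuous_map (top_of_set S) X p"
    and stable: "stable_value_at (f \<circ> p) x0"
    and cont: "\<And>n. continuous_on S (fs n \<circ> p)"
    and unif: "\<And>K. compactin X K \<Longrightarrow> uniform_limit K fs f sequentially"
  shows "attained_near X fs f (p x0)"
  unfolding attained_near_def
proof (intro allI impI, elim conjE)
  fix W assume "openin X W" "p x0 \<in> W"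
  define P where "P = {x \<in> S. p x \<in> W}"
  have "openin (top_of_set S) P"
    unfolding P_def using openin_continuous_map_preimage[OF p \<open>openin X W\<close>] by simp
  then have "open P" using \<open>open S\<close> openin_open_trans by blast
  moreover have "x0 \<in> P" using \<open>x0 \<in> S\<close> \<open>p x0 \<in> W\<close> by (simp add: P_def)
  ultimately obtain R where "R > 0" "cball x0 R \<subseteq> P"
    using open_contains_cball by blast
  then have "\<forall>\<^sub>F r in at_right 0. cball x0 r \<subseteq> P"
    unfolding eventually_at_right_field by (meson less_imp_le order_trans subset_cball)
  then have "\<forall>\<^sub>F r in at_right 0. cball x0 r \<subseteq> P \<and> (\<exists>e>0. \<forall>H. continuous_on (cball x0 r) H \<longrightarrow>
      (\<forall>x\<in>cball x0 r. dist (H x) ((f \<circ> p) x) < e) \<longrightarrow> (f \<circ> p) x0 \<in> H ` cball x0 r)"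
    using stable unfolding stable_value_at_def by (rule eventually_conj)
  from eventually_happens'[OF trivial_limit_at_right_real this]
  obtain r e where "cball x0 r \<subseteq> P" "e > 0"
    and hits: "\<And>H. continuous_on (cball x0 r) H \<Longrightarrow>
        (\<forall>x\<in>cball x0 r. dist (H x) (f (p x)) < e) \<Longrightarrow> f (p x0) \<in> H ` cball x0 r"
    by auto
  define K where "K = p ` cball x0 r"
  have "cball x0 r \<subseteq> S" using \<open>cball x0 r \<subseteq> P\<close> by (auto simp: P_def)
  then have "compactin X K"
    unfolding K_def by (intro image_compactin[OF _ p]) (simp add: compactin_subtopology)
  moreover have "K \<subseteq> W" using \<open>cball x0 r \<subseteq> P\<close> by (auto simp: K_def P_def)
  moreover have "\<forall>\<^sub>F n in sequentially. f (p x0) \<in> fs n ` K"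
    using unif[OF \<open>compactin X K\<close>] \<open>e > 0\<close> unfolding uniform_limit_iff
  proof (elim allE impE eventually_mono)
    fix n assume "\<forall>y\<in>K. dist (fs n y) (f y) < e"
    then have "f (p x0) \<in> (fs n \<circ> p) ` cball x0 r"
      using hits cont[of n] \<open>cball x0 r \<subseteq> S\<close> by (simp add: K_def continuous_on_subset)
    then show "f (p x0) \<in> fs n ` K" by (simp add: K_def image_comp)
  qed
  ultimately show "\<exists>K. compactin X K \<and> K \<subseteq> W \<and> (\<forall>\<^sub>F n in sequentially. f (p x0) \<in> fs n ` K)"
    by blast
qed

lemma C1_on_imp_differentiable_on: "C1_on g S \<Longrightarrow> g differentiable_on S"
  unfolding C1_on_def differentiable_on_def differentiable_def by blast

lemma is_chart_inj_on:
  assumes "is_chart X (U, V, \<phi>)"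
  shows "inj_on \<phi> U"
proof -
  have "openin X U" and hom: "homeomorphic_map (subtopology X U) (top_of_set (\<phi> ` U)) \<phi>"
    using assms by (auto simp: is_chart_def)
  then have "topspace (subtopology X U) = U" by (simp add: openin_subset inf.absorb2)
  then show ?thesis using homeomorphic_imp_injective_map[OF hom] by simp
qed

lemma is_chart_continuous_map_inv:
  assumes "is_chart X (U, V, \<phi>)"
  shows "continuous_map (top_of_set (\<phi> ` U)) X (inv_into U \<phi>)"
proof -
  have "openin X U" and hom: "homeomorphic_map (subtopology X U) (top_of_set (\<phi> ` U)) \<phi>"
    using assms by (auto simp: is_chart_def)
  then have topU: "topspace (subtopology X U) = U" by (simp add: openin_subset inf.absorb2)
  obtain g where g: "homeomorphic_maps (subtopology X U) (top_of_set (\<phi> ` U)) \<phi> g"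
    using hom homeomorphic_map_maps by blast
  then have contg: "continuous_map (top_of_set (\<phi> ` U)) (subtopology X U) g"
    by (simp add: homeomorphic_maps_def)
  have "g y = inv_into U \<phi> y" if "y \<in> \<phi> ` U" for y
  proof -
    have "g y \<in> U"
      using continuous_map_image_subset_topspace[OF contg] that topU by auto
    moreover have "\<phi> (g y) = y"
      using g that unfolding homeomorphic_maps_def by auto
    ultimately show ?thesis
      using is_chart_inj_on[OF assms] by (metis inv_into_f_f)
  qed
  then have "continuous_map (top_of_set (\<phi> ` U)) (subtopology X U) (inv_into U \<phi>)"
    by (intro continuous_map_eq[OF contg]) simp
  then show ?thesis
    by (rule continuous_map_into_fulltopology)
qed

lemma is_chart_dim_le_if_injective:
  fixes g :: "'a \<Rightarrow> 'm::euclidean_space"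
  assumes chart: "is_chart X (U, V, \<phi>)" and "U \<noteq> {}"
    and cont: "continuous_on (\<phi> ` U) (g \<circ> inv_into U \<phi>)" and inj: "inj_on g U"
  shows "dim V \<le> DIM('m)"
proof -
  have "inj_on (inv_into U \<phi>) (\<phi> ` U)" "inv_into U \<phi> ` \<phi> ` U = U"
    using is_chart_inj_on[OF chart] by (auto simp: inj_on_inv_into)
  then have "inj_on (g \<circ> inv_into U \<phi>) (\<phi> ` U)"
    using inj by (simp add: comp_inj_on)
  moreover have "subspace V" "openin (top_of_set V) (\<phi> ` U)"
    using chart by (auto simp: is_chart_def)
  ultimately show ?thesis
    using invariance_of_dimension_subspaces[of V "\<phi> ` U" UNIV "g \<circ> inv_into U \<phi>"] cont \<open>U \<noteq> {}\<close>
    by simp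
qed

lemma negligible_differentiable_image_lowdim_subspace:
  fixes g :: "'n::euclidean_space \<Rightarrow> 'm::euclidean_space"
  assumes "subspace V" "W \<subseteq> V" "dim V < DIM('m)" and diff: "g differentiable_on W"
  shows "negligible (g ` W)"
proof -
  have "dim V \<le> dim (UNIV :: 'm set)"
    using \<open>dim V < DIM('m)\<close> by simp
  then obtain V0 :: "'m set" where "subspace V0" "dim V0 = dim V"
    using choose_subspace_of_subspace by blast
  obtain L :: "'m \<Rightarrow> 'n" and L' where "linear L" "L' ` V = V0"
    and LL': "\<And>y. y \<in> V \<Longrightarrow> L (L' y) = y"
    by (rule isometries_subspaces[OF \<open>subspace V0\<close> \<open>subspace V\<close> \<open>dim V0 = dim V\<close>]) blast
  have "negligible V0"
    using \<open>dim V0 = dim V\<close> \<open>dim V < DIM('m)\<close> by (simp add: negligible_lowdim)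
  moreover have "L' ` W \<subseteq> V0"
    using \<open>L' ` V = V0\<close> \<open>W \<subseteq> V\<close> by blast
  ultimately have "negligible (L' ` W)"
    by (rule negligible_subset)
  moreover have LW: "L ` L' ` W = W"
  proof -
    have "(\<lambda>y. L (L' y)) ` W = id ` W"
      by (rule image_cong) (use LL' \<open>W \<subseteq> V\<close> in auto)
    then show ?thesis by (simp add: image_image)
  qed
  moreover have "(\<lambda>x. g (L x)) differentiable_on L' ` W"
    by (rule differentiable_on_compose) (use \<open>linear L\<close> diff LW in \<open>auto intro: linear_imp_differentiable_on\<close>)
  then have "(g \<circ> L) differentiable_on L' ` W"
    by (simp add: comp_def)
  ultimately have "negligible ((g \<circ> L) ` L' ` W)"
    using negligible_differentiable_image_negligible[OF order_refl] by blast
  then show ?thesis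
    by (metis LW image_comp)
qed

lemma full_dim_subspace_linear_parametrisation:
  fixes V :: "'n::euclidean_space set"
  assumes "subspace V" "dim V = DIM('m)" and W: "openin (top_of_set V) W"
  obtains L :: "'m::euclidean_space \<Rightarrow> 'n" and S where "linear L" "open S" "L ` S = W"
proof -
  obtain L :: "'m \<Rightarrow> 'n" and L' where "linear L" "L ` UNIV = V"
    and LL': "\<And>y. y \<in> V \<Longrightarrow> L (L' y) = y"
    using isometries_subspaces[OF subspace_UNIV \<open>subspace V\<close>] \<open>dim V = DIM('m)\<close> by (metis dim_UNIV)
  obtain G where "open G" "W = V \<inter> G"
    using W by (auto simp: openin_open)
  have "open (L -` G)"
    using \<open>open G\<close> \<open>linear L\<close> by (simp add: continuous_open_vimage linear_continuous_at linear_linear)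
  moreover have "L ` (L -` G) = W"
    using \<open>W = V \<inter> G\<close> \<open>L ` UNIV = V\<close> LL' by auto
  ultimately show ?thesis using that \<open>linear L\<close> by blast
qed

lemma is_chart_negligible_image_lowdim:
  fixes f :: "'a \<Rightarrow> 'm::euclidean_space"
  assumes chart: "is_chart X (U, V, \<phi>)" and "dim V < DIM('m)"
    and diff: "(f \<circ> inv_into U \<phi>) differentiable_on \<phi> ` U"
  shows "negligible (f ` U)"
proof -
  have "negligible ((f \<circ> inv_into U \<phi>) ` \<phi> ` U)"
    by (rule negligible_differentiable_image_lowdim_subspace[where V = V])
       (use chart \<open>dim V < DIM('m)\<close> diff in \<open>auto simp: is_chart_def\<close>)
  moreover have "(f \<circ> inv_into U \<phi>) ` \<phi> ` U = f ` U"
    using is_chart_inj_on[OF chart] by (simp add: image_comp cong: image_cong)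
  ultimately show ?thesis by simp
qed

lemma is_chart_full_dim_parametrisation:
  fixes \<phi> :: "'a \<Rightarrow> 'n::euclidean_space"
  assumes chart: "is_chart X (U, V, \<phi>)" and "dim V = DIM('m)"
  obtains S and p :: "'m::euclidean_space \<Rightarrow> 'a"
  where "open S" "continuous_map (top_of_set S) X p" "U \<subseteq> p ` S"
    and "\<And>g :: 'a \<Rightarrow> 'b::real_normed_vector.
          (g \<circ> inv_into U \<phi>) differentiable_on \<phi> ` U \<Longrightarrow> (g \<circ> p) differentiable_on S"
proof -
  have "subspace V" "openin (top_of_set V) (\<phi> ` U)"
    using chart by (auto simp: is_chart_def)
  obtain L :: "'m \<Rightarrow> 'n" and S where "linear L" "open S" "L ` S = \<phi> ` U"
    by (rule full_dim_subspace_linear_parametrisation[OF \<open>subspace V\<close> \<open>dim V = DIM('m)\<close>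
          \<open>openin (top_of_set V) (\<phi> ` U)\<close>])
  let ?p = "inv_into U \<phi> \<circ> L"
  have "continuous_map (top_of_set S) (top_of_set (\<phi> ` U)) L"
    using \<open>L ` S = \<phi> ` U\<close> \<open>linear L\<close>
    by (simp add: continuous_map_in_subtopology continuous_map_iff_continuous2
        linear_continuous_on linear_linear flip: image_subset_iff_funcset)
  then have "continuous_map (top_of_set S) X ?p"
    by (rule continuous_map_compose[OF _ is_chart_continuous_map_inv[OF chart]])
  moreover have "U \<subseteq> ?p ` S"
  proof
    fix t assume "t \<in> U"
    then have "\<phi> t \<in> L ` S" using \<open>L ` S = \<phi> ` U\<close> by simp
    then obtain x where "\<phi> t = L x" "x \<in> S" by (rule imageE)
    then have "t = ?p x" using is_chart_inj_on[OF chart] \<open>t \<in> U\<close> by (metis comp_apply inv_into_f_f)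
    then show "t \<in> ?p ` S" using \<open>x \<in> S\<close> by blast
  qed
  moreover have "(g \<circ> ?p) differentiable_on S"
    if "(g \<circ> inv_into U \<phi>) differentiable_on \<phi> ` U" for g :: "'a \<Rightarrow> 'b"
  proof -
    have "L differentiable_on S"
      using \<open>linear L\<close> by (rule linear_imp_differentiable_on)
    from differentiable_on_compose[OF this that[folded \<open>L ` S = \<phi> ` U\<close>]]
    show ?thesis by (simp add: comp_def)
  qed
  ultimately show ?thesis using that \<open>open S\<close> by blast
qed

lemma is_chart_negligible_unstable_values:
  fixes f :: "'a \<Rightarrow> real^'l::finite" and fs :: "nat \<Rightarrow> 'a \<Rightarrow> real^'l"
    and \<phi> :: "'a \<Rightarrow> 'n::euclidean_space"
  assumes chart: "is_chart X (U, V, \<phi>)"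
    and diff_f: "(f \<circ> inv_into U \<phi>) differentiable_on \<phi> ` U"
    and diff_fs: "\<And>n. (fs n \<circ> inv_into U \<phi>) differentiable_on \<phi> ` U"
    and inj: "inj_on (fs 0) U"
    and unif: "\<And>K. compactin X K \<Longrightarrow> uniform_limit K fs f sequentially"
  shows "\<exists>B. negligible B \<and> (\<forall>t\<in>U. f t \<notin> B \<longrightarrow> attained_near X fs f t)"
proof -
  have "U = {} \<or> dim V \<le> CARD('l)"
    using is_chart_dim_le_if_injective[OF chart _ differentiable_imp_continuous_on[OF diff_fs] inj]
    by auto
  then consider "U = {}" | "dim V < CARD('l)" | "dim V = CARD('l)"
    using le_neq_implies_less by blast
  then show ?thesis
  proof cases
    case 1
    then show ?thesis by auto
  next
    case 2
    then have "negligible (f ` U)"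
      using is_chart_negligible_image_lowdim[OF chart _ diff_f] by simp
    then show ?thesis by blast
  next
    case 3
    then have "dim V = DIM(real^'l)" by simp
    obtain S and p :: "real^'l \<Rightarrow> 'a" where "open S" and p: "continuous_map (top_of_set S) X p"
      and "U \<subseteq> p ` S"
      and diff: "\<And>g :: 'a \<Rightarrow> real^'l.
          (g \<circ> inv_into U \<phi>) differentiable_on \<phi> ` U \<Longrightarrow> (g \<circ> p) differentiable_on S"
      using is_chart_full_dim_parametrisation[OF chart \<open>dim V = DIM(real^'l)\<close>] by blast
    obtain C where "negligible C"
      and stable: "\<forall>x\<in>S. (f \<circ> p) x \<notin> C \<longrightarrow> stable_value_at (f \<circ> p) x"
      using negligible_unstable_values[OF \<open>open S\<close> diff[OF diff_f]] by blast
    have "attained_near X fs f (p x)" if "x \<in> S" "f (p x) \<notin> C" for x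
      by (rule attained_near_if_stable_value[OF \<open>open S\<close> \<open>x \<in> S\<close> p])
         (use stable that differentiable_imp_continuous_on[OF diff[OF diff_fs]] unif in auto)
    then show ?thesis using \<open>negligible C\<close> \<open>U \<subseteq> p ` S\<close> by blast
  qed
qed

lemma is_chart_subtopology_openin:
  assumes "is_chart (subtopology X T) c" and "openin X T"
  shows "is_chart X c"
proof -
  obtain U V \<phi> where c: "c = (U, V, \<phi>)" by (cases c) auto
  then have UT: "openin (subtopology X T) U" using assms(1) by (simp add: is_chart_def)
  then have "openin X U" by (rule openin_trans_full[OF _ \<open>openin X T\<close>])
  have "U \<subseteq> T" using openin_subset[OF UT] by simp
  then have "subtopology (subtopology X T) U = subtopology X U"
    by (simp add: subtopology_subtopology Int_absorb1)
  then show ?thesis using assms(1) \<open>openin X U\<close> by (simp add: c is_chart_def)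
qed

lemma C1_manifold_countable_subatlas:
  assumes "C1_manifold Y A"
  obtains C where "countable C" "C \<subseteq> A" "topspace Y \<subseteq> \<Union> (fst ` C)"
proof -
  have "Lindelof_space Y"
    using assms by (simp add: C1_manifold_def second_countable_imp_Lindelof_space)
  moreover have "(\<forall>U\<in>fst ` A. openin Y U) \<and> topspace Y \<subseteq> \<Union> (fst ` A)"
    using assms by (auto simp: C1_manifold_def C1_atlas_def is_chart_def)
  ultimately have "\<exists>\<U>. countable \<U> \<and> \<U> \<subseteq> fst ` A \<and> topspace Y \<subseteq> \<Union> \<U>"
    unfolding Lindelof_space_alt by (elim allE impE)
  then obtain \<U> where "countable \<U>" "\<U> \<subseteq> fst ` A" "topspace Y \<subseteq> \<Union> \<U>"
    by (elim exE conjE)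
  moreover obtain C where "countable C" "C \<subseteq> A" "\<U> = fst ` C"
    using countable_subset_image[THEN iffD1, OF conjI[OF calculation(1,2)]] by (elim exE conjE)
  ultimately show ?thesis using that by simp
qed

lemma C1_manifold_negligible_unstable_values:
  fixes f :: "'a \<Rightarrow> real^'l::finite" and fs :: "nat \<Rightarrow> 'a \<Rightarrow> real^'l"
    and A :: "('a set \<times> 'n::euclidean_space set \<times> ('a \<Rightarrow> 'n)) set"
  assumes "openin X T" and manifold: "C1_manifold (subtopology X T) A"
    and Cf: "C1_map (subtopology X T) A f" and Cfs: "\<And>n. C1_map (subtopology X T) A (fs n)"
    and inj: "inj_on (fs 0) T"
    and unif: "\<And>K. compactin X K \<Longrightarrow> uniform_limit K fs f sequentially"
  shows "\<exists>B. negligible B \<and> (\<forall>t\<in>T. f t \<notin> B \<longrightarrow> attained_near X fs f t)"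
proof -
  obtain C where "countable C" "C \<subseteq> A" and cover: "T \<subseteq> \<Union> (fst ` C)"
    using C1_manifold_countable_subatlas[OF manifold] openin_subset[OF \<open>openin X T\<close>]
    by (metis inf.absorb2 topspace_subtopology)
  have "\<exists>B. negligible B \<and> (\<forall>t\<in>fst c. f t \<notin> B \<longrightarrow> attained_near X fs f t)" if "c \<in> A" for c
  proof -
    obtain U V \<phi> where c: "c = (U, V, \<phi>)" by (cases c) auto
    have "is_chart (subtopology X T) c"
      using manifold that by (simp add: C1_manifold_def C1_atlas_def)
    then have chart: "is_chart X (U, V, \<phi>)"
      using is_chart_subtopology_openin \<open>openin X T\<close> c by blast
    have "U \<subseteq> T"
      using \<open>is_chart (subtopology X T) c\<close> openin_subset by (fastforce simp: c is_chart_def)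
    have "C1_on (f \<circ> inv_into U \<phi>) (\<phi> ` U)" "\<And>n. C1_on (fs n \<circ> inv_into U \<phi>) (\<phi> ` U)"
      using Cf Cfs that unfolding C1_map_def c by fastforce+
    then have "(f \<circ> inv_into U \<phi>) differentiable_on \<phi> ` U"
      "\<And>n. (fs n \<circ> inv_into U \<phi>) differentiable_on \<phi> ` U"
      by (simp_all add: C1_on_imp_differentiable_on)
    then show ?thesis
      using is_chart_negligible_unstable_values[OF chart _ _ inj_on_subset[OF inj \<open>U \<subseteq> T\<close>] unif]
      by (simp add: c)
  qed
  then have "\<forall>c\<in>C. \<exists>B. negligible B \<and> (\<forall>t\<in>fst c. f t \<notin> B \<longrightarrow> attained_near X fs f t)"
    using \<open>C \<subseteq> A\<close> by blast
  then obtain B where B: "\<forall>c\<in>C. negligible (B c) \<and> (\<forall>t\<in>fst c. f t \<notin> B c \<longrightarrow> attained_near X fs f t)"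
    by (rule bchoice[THEN exE])
  have "negligible (\<Union> (B ` C))"
    using B \<open>countable C\<close> by (auto intro: negligible_countable_Union)
  moreover have "\<forall>t\<in>T. f t \<notin> \<Union> (B ` C) \<longrightarrow> attained_near X fs f t"
    using B cover by blast
  ultimately show ?thesis by blast
qed

lemma Hausdorff_space_disjoint_open_cover:
  assumes "disjoint_family_on T J" and cover: "(\<Union>j\<in>J. T j) = topspace X"
    and open_T: "\<And>j. j \<in> J \<Longrightarrow> openin X (T j)"
    and Hausdorff_T: "\<And>j. j \<in> J \<Longrightarrow> Hausdorff_space (subtopology X (T j))"
  shows "Hausdorff_space X"
  unfolding Hausdorff_space_def
proof (intro allI impI, elim conjE)
  fix x y assume "x \<in> topspace X" "y \<in> topspace X" "x \<noteq> y"
  then obtain i k where "i \<in> J" "x \<in> T i" "k \<in> J" "y \<in> T k"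
    using cover by blast
  show "\<exists>U V. openin X U \<and> openin X V \<and> x \<in> U \<and> y \<in> V \<and> disjnt U V"
  proof (cases "i = k")
    case True
    have "T i \<subseteq> topspace X" using cover \<open>i \<in> J\<close> by blast
    then obtain U V where "openin (subtopology X (T i)) U" "openin (subtopology X (T i)) V"
        "x \<in> U" "y \<in> V" "disjnt U V"
      using Hausdorff_T[OF \<open>i \<in> J\<close>] \<open>x \<in> T i\<close> \<open>y \<in> T k\<close> \<open>x \<noteq> y\<close> True
      unfolding Hausdorff_space_def by (metis inf.absorb2 topspace_subtopology)
    then show ?thesis
      using openin_trans_full open_T[OF \<open>i \<in> J\<close>] by blast
  next
    case False
    then have "disjnt (T i) (T k)"
      using assms(1) \<open>i \<in> J\<close> \<open>k \<in> J\<close> by (simp add: disjoint_family_on_def disjnt_def)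
    then show ?thesis
      using open_T \<open>i \<in> J\<close> \<open>k \<in> J\<close> \<open>x \<in> T i\<close> \<open>y \<in> T k\<close> by blast
  qed
qed

lemma noninvertible_values_subset_unstable:
  assumes "Hausdorff_space X" and inj: "\<And>n. inj_on (fs n) (topspace X)"
  shows "noninvertible_values (topspace X) f \<subseteq> f ` {t \<in> topspace X. \<not> attained_near X fs f t}"
proof
  fix u assume "u \<in> noninvertible_values (topspace X) f"
  then obtain t1 t2 where t: "t1 \<in> topspace X" "t2 \<in> topspace X" "t1 \<noteq> t2" "f t1 = u" "f t2 = u"
    by (auto simp: noninvertible_values_def)
  show "u \<in> f ` {t \<in> topspace X. \<not> attained_near X fs f t}"
  proof (rule ccontr)
    assume "u \<notin> f ` {t \<in> topspace X. \<not> attained_near X fs f t}"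
    then have "attained_near X fs f t" if "t \<in> topspace X" "f t = u" for t
      using that by blast
    then have "attained_near X fs f t1" "attained_near X fs f t2"
      using t by simp_all
    obtain W1 W2 where "openin X W1" "openin X W2" "t1 \<in> W1" "t2 \<in> W2" "disjnt W1 W2"
      using \<open>Hausdorff_space X\<close> t(1-3) unfolding Hausdorff_space_def by blast
    obtain K1 where K1: "compactin X K1" "K1 \<subseteq> W1" "\<forall>\<^sub>F n in sequentially. u \<in> fs n ` K1"
      using \<open>attained_near X fs f t1\<close> \<open>openin X W1\<close> \<open>t1 \<in> W1\<close> t(4)
      unfolding attained_near_def by blast
    obtain K2 where K2: "compactin X K2" "K2 \<subseteq> W2" "\<forall>\<^sub>F n in sequentially. u \<in> fs n ` K2"
      using \<open>attained_near X fs f t2\<close> \<open>openin X W2\<close> \<open>t2 \<in> W2\<close> t(5)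
      unfolding attained_near_def by blast
    obtain n where "u \<in> fs n ` K1 \<and> u \<in> fs n ` K2"
      using eventually_happens'[OF sequentially_bot eventually_conj[OF K1(3) K2(3)]] by blast
    then obtain p q where "p \<in> K1" "q \<in> K2" "fs n p = fs n q"
      by (metis imageE)
    moreover have "p \<in> topspace X" "q \<in> topspace X"
      using K1 K2 \<open>p \<in> K1\<close> \<open>q \<in> K2\<close> compactin_subset_topspace by blast+
    ultimately have "p = q" using inj_onD[OF inj] by blast
    then show False using \<open>p \<in> K1\<close> \<open>q \<in> K2\<close> K1 K2 \<open>disjnt W1 W2\<close> by (auto simp: disjnt_def)
  qed
qed

theorem lemma7:
  fixes X :: "'a topology" and J :: "'j set" and T :: "'j \<Rightarrow> 'a set"
    and A :: "'j \<Rightarrow> ('a set \<times> 'n::euclidean_space set \<times> ('a \<Rightarrow> 'n)) set"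
    and f :: "'a \<Rightarrow> real ^ 'l" and fs :: "nat \<Rightarrow> 'a \<Rightarrow> real ^ 'l"
  assumes "countable J"
    and "disjoint_family_on T J"
    and "(\<Union>j\<in>J. T j) = topspace X"
    and "\<forall>j\<in>J. openin X (T j)"
    and "\<forall>j\<in>J. C1_manifold (subtopology X (T j)) (A j)"
    and "\<forall>j\<in>J. C1_map (subtopology X (T j)) (A j) f"
    and "\<forall>n. \<forall>j\<in>J. C1_map (subtopology X (T j)) (A j) (fs n)"
    and "\<forall>n. inj_on (fs n) (topspace X)"
    and "\<forall>K. compactin X K \<longrightarrow> uniform_limit K fs f sequentially"
  shows "noninvertible_values (topspace X) f \<in> null_sets lebesgue"
proof -
  have "Hausdorff_space X"
    by (rule Hausdorff_space_disjoint_open_cover[OF assms(2,3)])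
       (use assms(4,5) in \<open>auto simp: C1_manifold_def\<close>)
  have "\<forall>j\<in>J. \<exists>B. negligible B \<and> (\<forall>t\<in>T j. f t \<notin> B \<longrightarrow> attained_near X fs f t)"
  proof
    fix j assume "j \<in> J"
    have "T j \<subseteq> topspace X"
      using UN_upper[OF \<open>j \<in> J\<close>, of T] assms(3) by simp
    then have "inj_on (fs 0) (T j)"
      using assms(8) by (blast intro: inj_on_subset)
    show "\<exists>B. negligible B \<and> (\<forall>t\<in>T j. f t \<notin> B \<longrightarrow> attained_near X fs f t)"
      by (rule C1_manifold_negligible_unstable_values[of X "T j" "A j" f fs])
         (use assms(4-7,9) \<open>j \<in> J\<close> \<open>inj_on (fs 0) (T j)\<close> in auto)
  qed
  then obtain B where B: "\<forall>j\<in>J. negligible (B j) \<and> (\<forall>t\<in>T j. f t \<notin> B j \<longrightarrow> attained_near X fs f t)"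
    by (rule bchoice[THEN exE])
  have "f ` {t \<in> topspace X. \<not> attained_near X fs f t} \<subseteq> (\<Union>j\<in>J. B j)"
  proof (rule image_subsetI)
    fix t assume t: "t \<in> {t \<in> topspace X. \<not> attained_near X fs f t}"
    then obtain j where "j \<in> J" "t \<in> T j"
      using assms(3) by (metis (no_types, lifting) UN_E mem_Collect_eq)
    then show "f t \<in> (\<Union>j\<in>J. B j)" using B t by blast
  qed
  then have "noninvertible_values (topspace X) f \<subseteq> (\<Union>j\<in>J. B j)"
    by (rule subset_trans[OF noninvertible_values_subset_unstable[OF \<open>Hausdorff_space X\<close>
          assms(8)[rule_format]]])
  moreover have "negligible (\<Union>j\<in>J. B j)"
    by (rule negligible_countable_Union) (use B \<open>countable J\<close> in auto)
  ultimately have "negligible (noninvertible_values (topspace X) f)"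
    by (rule negligible_subset[rotated])
  then show ?thesis by (simp add: negligible_iff_null_sets)
qed

end
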